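(* Let $\mathcal V$ be a finite-dimensional complex vector space and $\psi:\mathbb C\to\mathrm{End}(\mathcal V)$ a rational function, regular at $0$ and $\infty$, with $\psi(0)=1$ and $[\psi(w),\psi(w')]=0$ for all $w,w'$. Let $\sigma(\psi)\subset\mathbb C^\times$ be the set of poles of $\psi(w)^{\pm1}$ and $\mathsf Y(\psi)=\bigcup_{\alpha\in\sigma(\psi)}[\alpha,\infty)$, where $[\alpha,\infty)=\{t\alpha:t\in\mathbb R_{\ge1}\}$. Then there is a unique single-valued holomorphic function $H:\mathbb C\setminus\mathsf Y(\psi)\to\mathrm{End}(\mathcal V)$ with $\exp(H(w))=\psi(w)$ and $H(0)=0$. Moreover $[H(w),H(w')]=0$ for all $w,w'$, and $H'(w)=\psi(w)^{-1}\psi'(w)$. *)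

theory Defs
  imports "HOL-Complex_Analysis.Complex_Analysis"
begin

text \<open>End(V) for a finite-dimensional complex vector space V is modelled by square
  complex matrices indexed by a finite type 'n (dim V = CARD('n)), with matrix product.\<close>

definition mat_pow :: "complex^'n^'n \<Rightarrow> nat \<Rightarrow> complex^'n^'n" where
  "mat_pow A k = (((**) A) ^^ k) (mat 1)"

definition mat_exp :: "complex^'n^'n \<Rightarrow> complex^'n^'n" where
  "mat_exp A = (\<Sum>k. (inverse (fact k) :: real) *\<^sub>R mat_pow A k)"

definition rational_mat_fun :: "(complex \<Rightarrow> complex^'n^'n) \<Rightarrow> bool" where
  "rational_mat_fun \<psi> \<longleftrightarrow> (\<exists>(P :: complex poly^'n^'n) q. q \<noteq> 0 \<and>
     (\<forall>w. poly q w \<noteq> 0 \<longrightarrow> \<psi> w = (\<chi> i j. poly (P $ i $ j) w / poly q w)))"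

definition mat_pole :: "(complex \<Rightarrow> complex^'n^'n) \<Rightarrow> complex \<Rightarrow> bool" where
  "mat_pole f z \<longleftrightarrow> (\<exists>i j. is_pole (\<lambda>w. f w $ i $ j) z)"

definition pole_set :: "(complex \<Rightarrow> complex^'n^'n) \<Rightarrow> complex set" where
  "pole_set \<psi> = {z. z \<noteq> 0 \<and> (mat_pole \<psi> z \<or> mat_pole (\<lambda>w. matrix_inv (\<psi> w)) z)}"

definition ray :: "complex \<Rightarrow> complex set" where
  "ray \<alpha> = {complex_of_real t * \<alpha> | t. t \<ge> 1}"

definition Yset :: "(complex \<Rightarrow> complex^'n^'n) \<Rightarrow> complex set" where
  "Yset \<psi> = (\<Union>\<alpha>\<in>pole_set \<psi>. ray \<alpha>)"

definition mat_deriv :: "(complex \<Rightarrow> complex^'n^'n) \<Rightarrow> complex \<Rightarrow> complex^'n^'n" where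
  "mat_deriv f w = (\<chi> i j. deriv (\<lambda>z. f z $ i $ j) w)"

definition mat_holomorphic_on :: "(complex \<Rightarrow> complex^'n^'n) \<Rightarrow> complex set \<Rightarrow> bool" where
  "mat_holomorphic_on f S \<longleftrightarrow> (\<forall>i j. (\<lambda>z. f z $ i $ j) holomorphic_on S)"

definition log_branch :: "(complex \<Rightarrow> complex^'n^'n) \<Rightarrow> (complex \<Rightarrow> complex^'n^'n) \<Rightarrow> bool" where
  "log_branch \<psi> H \<longleftrightarrow> mat_holomorphic_on H (- Yset \<psi>) \<and>
     (\<forall>w \<in> - Yset \<psi>. mat_exp (H w) = \<psi> w) \<and> H 0 = 0"

end

theory Submission
  imports Defs
begin

text \<open>Since the values of \<open>\<psi>\<close> commute, so do their inverses and derivatives, hence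
  the logarithmic derivative \<open>F = \<psi>\<^sup>-\<^sup>1 \<psi>'\<close> has pairwise commuting values. The domain
  \<open>\<Omega> = \<complex> - Y(\<psi>)\<close> is the complement of finitely many rays pointing away from 0, hence
  star-shaped about 0, so \<open>F\<close> has a primitive \<open>H\<close> on \<open>\<Omega>\<close> with \<open>H(0) = 0\<close>. Its values commute with
  those of \<open>F\<close> and with each other, because the commutators have zero derivative and vanish at 0.
  Consequently \<open>(exp (-H) \<psi>)' = exp (-H) (\<psi>' - F \<psi>) = 0\<close>, so \<open>exp H = \<psi>\<close>.
  Another logarithm \<open>H'\<close> with \<open>H'(0) = 0\<close> is small near 0, where the exponential is injective
  (a small \<open>X\<close> commuting with \<open>exp Y\<close> commutes with \<open>Y\<close>), so \<open>H' = H\<close> near 0 and hence on all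
  of \<open>\<Omega>\<close> by analytic continuation.\<close>

lemma norm_axis_1_algebra [simp]: "norm (axis j (1::'a::real_normed_algebra_1)) = 1"
proof -
  have "(\<Sum>i\<in>UNIV. (norm (axis j (1::'a) $ i))\<^sup>2) = (\<Sum>i\<in>UNIV. if i = j then 1 else 0)"
    by (rule sum.cong) (auto simp: axis_def)
  then show ?thesis by (simp add: norm_vec_def L2_set_def)
qed

lemma matrix_entry_le_onorm:
  fixes A :: "'a::{euclidean_space,real_normed_algebra_1}^'n^'m"
  shows "norm (A $ i $ j) \<le> onorm ((*v) A)"
proof -
  have "A $ i $ j = (A *v axis j 1) $ i"
    by (simp add: matrix_vector_mult_def axis_def if_distrib cong: if_cong)
  also have "norm \<dots> \<le> norm (A *v axis j 1)" by (rule Finite_Cartesian_Product.norm_nth_le)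
  also have "\<dots> \<le> onorm ((*v) A)"
    using onorm[OF matrix_vector_mul_bounded_linear, of A "axis j 1"] by simp
  finally show ?thesis .
qed

lemma onorm_le_matrix_entry_sum:
  fixes A :: "'a::{euclidean_space,real_normed_algebra_1}^'n^'m"
  shows "onorm ((*v) A) \<le> (\<Sum>i\<in>UNIV. \<Sum>j\<in>UNIV. norm (A $ i $ j))"
proof (rule onorm_le)
  fix x
  have "norm (A *v x) \<le> (\<Sum>i\<in>UNIV. norm ((A *v x) $ i))"
    unfolding norm_vec_def by (rule L2_set_le_sum) simp
  also have "\<dots> \<le> (\<Sum>i\<in>UNIV. \<Sum>j\<in>UNIV. norm (A $ i $ j) * norm x)"
  proof (rule sum_mono)
    fix i
    have "norm ((A *v x) $ i) \<le> (\<Sum>j\<in>UNIV. norm (A $ i $ j * x $ j))"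
      unfolding matrix_vector_mult_def by (simp add: norm_sum)
    also have "\<dots> \<le> (\<Sum>j\<in>UNIV. norm (A $ i $ j) * norm x)"
      by (rule sum_mono, rule order_trans[OF norm_mult_ineq]) (simp add: mult_left_mono Finite_Cartesian_Product.norm_nth_le)
    finally show "norm ((A *v x) $ i) \<le> (\<Sum>j\<in>UNIV. norm (A $ i $ j) * norm x)" .
  qed
  finally show "norm (A *v x) \<le> (\<Sum>i\<in>UNIV. \<Sum>j\<in>UNIV. norm (A $ i $ j)) * norm x"
    by (simp add: sum_distrib_right)
qed

lemma tendsto_matrix_mult:
  fixes M :: "'b \<Rightarrow> 'a::real_normed_algebra_1^'n^'m" and N :: "'b \<Rightarrow> 'a^'k^'n"
  assumes "(M \<longlongrightarrow> A) F" "(N \<longlongrightarrow> B) F"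
  shows "((\<lambda>x. M x ** N x) \<longlongrightarrow> A ** B) F"
  by (intro vec_tendstoI) (simp add: matrix_matrix_mult_def, intro tendsto_sum tendsto_mult tendsto_vec_nth assms)

lemma mat_matrix_mult_nth: "(mat c ** A) $ i $ j = c * A $ i $ j"
  for A :: "'a::semiring_1^'n^'m"
proof -
  have "(\<Sum>k\<in>UNIV. (if i = k then c else 0) * A $ k $ j) = (\<Sum>k\<in>UNIV. if k = i then c * A $ k $ j else 0)"
    by (rule sum.cong) auto
  then show ?thesis by (simp add: matrix_matrix_mult_def mat_def)
qed

lemma matrix_mat_mult_nth: "(A ** mat c) $ i $ j = A $ i $ j * c"
  for A :: "'a::semiring_1^'n^'m"
proof -
  have "(\<Sum>k\<in>UNIV. A $ i $ k * (if k = j then c else 0)) = (\<Sum>k\<in>UNIV. if k = j then A $ i $ k * c else 0)"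
    by (rule sum.cong) auto
  then show ?thesis by (simp add: matrix_matrix_mult_def mat_def)
qed

lemma mat_vector_mult_nth: "(mat c *v v) $ i = c * v $ i"
  for v :: "'a::semiring_1^'n"
proof -
  have "(\<Sum>k\<in>UNIV. (if i = k then c else 0) * v $ k) = (\<Sum>k\<in>UNIV. if k = i then c * v $ k else 0)"
    by (rule sum.cong) auto
  then show ?thesis by (simp add: matrix_vector_mult_def mat_def)
qed

lemma matrix_inv_right: "invertible A \<Longrightarrow> A ** matrix_inv A = mat 1"
  and matrix_inv_left: "invertible A \<Longrightarrow> matrix_inv A ** A = mat 1"
  unfolding matrix_inv_def invertible_def by (metis (mono_tags, lifting) someI_ex)+

definition adjugate :: "'a::comm_ring_1^'n^'n \<Rightarrow> 'a^'n^'n" where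
  "adjugate A = (\<chi> k j. det (\<chi> i l. if l = k then (if i = j then 1 else 0) else A $ i $ l))"

lemma matrix_inv_nth:
  fixes A :: "'a::field^'n^'n"
  assumes "det A \<noteq> 0"
  shows "matrix_inv A $ k $ j = adjugate A $ k $ j / det A"
proof -
  have "A *v (matrix_inv A *v axis j 1) = axis j 1"
    using assms matrix_inv_right[of A]
    by (simp add: invertible_det_nz matrix_vector_mul_assoc)
  then have "matrix_inv A *v axis j 1 = (\<chi> k. det (\<chi> i l. if l = k then axis j 1 $ i else A $ i $ l) / det A)"
    using cramer[OF assms] by blast
  moreover have "(matrix_inv A *v axis j 1) $ k = matrix_inv A $ k $ j"
    by (simp add: matrix_vector_mult_def axis_def if_distrib cong: if_cong)
  moreover have "(\<chi> i l. if l = k then axis j 1 $ i else A $ i $ l) =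
      (\<chi> i l. if l = k then (if i = j then 1 else 0) else A $ i $ l)"
    by (simp add: axis_def vec_eq_iff)
  ultimately show ?thesis
    by (simp add: adjugate_def)
qed

lemma det_divide_entries:
  fixes a :: "'n::finite \<Rightarrow> 'n \<Rightarrow> 'a::field"
  assumes "c \<noteq> 0"
  shows "det (\<chi> i j. a i j / c) * c ^ CARD('n) = det (\<chi> i j. a i j)"
proof -
  have "of_int (sign p) * (\<Prod>i\<in>UNIV. a i (p i) / c) * c ^ CARD('n) =
        of_int (sign p) * (\<Prod>i\<in>UNIV. a i (p i))" for p :: "'n \<Rightarrow> 'n"
    using assms by (simp add: prod_dividef)
  then show ?thesis
    unfolding det_def sum_distrib_right by (intro sum.cong) simp_all
qed

section \<open>The Banach algebra of complex square matrices\<close>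

text \<open>With the operator norm, complex square matrices form a Banach algebra; this gives access to
  the library's \<open>exp\<close>, which agrees with \<open>mat_exp\<close> by \<open>Rep_cmat_exp\<close>.\<close>

typedef ('n::finite) cmat = "UNIV :: (complex^'n^'n) set" by simp

setup_lifting type_definition_cmat

instantiation cmat :: (finite) ring_1
begin
lift_definition zero_cmat :: "'a cmat" is 0 .
lift_definition one_cmat :: "'a cmat" is "mat 1" .
lift_definition plus_cmat :: "'a cmat \<Rightarrow> 'a cmat \<Rightarrow> 'a cmat" is "(+)" .
lift_definition minus_cmat :: "'a cmat \<Rightarrow> 'a cmat \<Rightarrow> 'a cmat" is "(-)" .
lift_definition uminus_cmat :: "'a cmat \<Rightarrow> 'a cmat" is uminus .
lift_definition times_cmat :: "'a cmat \<Rightarrow> 'a cmat \<Rightarrow> 'a cmat" is "(**)" .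
instance
proof
  fix a b c :: "'a cmat"
  show "a * b * c = a * (b * c)" by transfer (simp add: matrix_mul_assoc)
  show "1 * a = a" by transfer simp
  show "a * 1 = a" by transfer simp
  show "a + b + c = a + (b + c)" by transfer simp
  show "a + b = b + a" by transfer (simp add: add.commute)
  show "0 + a = a" by transfer simp
  show "- a + a = 0" by transfer simp
  show "a - b = a + - b" by transfer simp
  show "(a + b) * c = a * c + b * c" by transfer (simp add: vec_eq_iff matrix_matrix_mult_def distrib_right sum.distrib)
  show "a * (b + c) = a * b + a * c" by transfer (simp add: matrix_add_ldistrib)
  show "(0::'a cmat) \<noteq> 1"
  proof transfer
    obtain i :: 'a where True by blast
    have "(mat 1 :: complex^'a^'a) $ i $ i \<noteq> 0" by (simp add: mat_def)
    then show "(0::complex^'a^'a) \<noteq> mat 1" by auto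
  qed
qed
end

instantiation cmat :: (finite) real_vector
begin
lift_definition scaleR_cmat :: "real \<Rightarrow> 'a cmat \<Rightarrow> 'a cmat" is scaleR .
instance
  by standard (transfer, simp add: scaleR_add_right scaleR_add_left)+
end

instance cmat :: (finite) real_algebra_1
  by standard (transfer, simp add: scalar_matrix_assoc matrix_scalar_ac)+

instantiation cmat :: (finite) real_normed_algebra_1
begin
definition norm_cmat :: "'a cmat \<Rightarrow> real" where "norm_cmat x = onorm ((*v) (Rep_cmat x))"
definition sgn_cmat :: "'a cmat \<Rightarrow> 'a cmat" where "sgn_cmat x = x /\<^sub>R norm x"
definition dist_cmat :: "'a cmat \<Rightarrow> 'a cmat \<Rightarrow> real" where "dist_cmat x y = norm (x - y)"
definition uniformity_cmat :: "('a cmat \<times> 'a cmat) filter" where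
  "uniformity_cmat = (INF e\<in>{0 <..}. principal {(x, y). dist x y < e})"
definition open_cmat :: "'a cmat set \<Rightarrow> bool" where
  "open_cmat U \<longleftrightarrow> (\<forall>x\<in>U. eventually (\<lambda>(x', y). x' = x \<longrightarrow> y \<in> U) uniformity)"
instance
proof
  fix r :: real and x y :: "'a cmat"
  show "norm x = 0 \<longleftrightarrow> x = 0"
    unfolding norm_cmat_def onorm_eq_0[OF matrix_vector_mul_bounded_linear]
    by transfer (metis matrix_eq matrix_vector_mult_0)
  show "norm (x + y) \<le> norm x + norm y"
    unfolding norm_cmat_def plus_cmat.rep_eq matrix_vector_mult_add_rdistrib
    by (rule onorm_triangle) simp_all
  have "(*v) (Rep_cmat (r *\<^sub>R x)) = (\<lambda>v. r *\<^sub>R (Rep_cmat x *v v))"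
    by (simp add: scaleR_cmat.rep_eq fun_eq_iff vec_eq_iff matrix_vector_mult_def scaleR_sum_right)
  then show "norm (r *\<^sub>R x) = \<bar>r\<bar> * norm x"
    by (simp add: norm_cmat_def onorm_scaleR)
  have "(*v) (Rep_cmat (x * y)) = (*v) (Rep_cmat x) \<circ> (*v) (Rep_cmat y)"
    by (simp add: times_cmat.rep_eq fun_eq_iff matrix_vector_mul_assoc)
  then show "norm (x * y) \<le> norm x * norm y"
    unfolding norm_cmat_def by (metis onorm_compose matrix_vector_mul_bounded_linear)
  show "norm (1::'a cmat) = 1"
  proof -
    have "(*v) (mat 1 :: complex^'a^'a) = (\<lambda>v. v)" by (simp add: fun_eq_iff)
    then show ?thesis by (simp add: norm_cmat_def one_cmat.rep_eq onorm_id)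
  qed
qed (simp_all add: sgn_cmat_def dist_cmat_def uniformity_cmat_def open_cmat_def)
end

lemma norm_Rep_cmat_entry_le: "norm (Rep_cmat x $ i $ j) \<le> norm x"
  unfolding norm_cmat_def by (rule matrix_entry_le_onorm)

lemma norm_cmat_le_entry_sum: "norm x \<le> (\<Sum>i\<in>UNIV. \<Sum>j\<in>UNIV. norm (Rep_cmat x $ i $ j))"
  unfolding norm_cmat_def by (rule onorm_le_matrix_entry_sum)

lemma tendsto_cmat_iff:
  fixes f :: "'b \<Rightarrow> 'n::finite cmat"
  shows "(f \<longlongrightarrow> L) F \<longleftrightarrow> (\<forall>i j. ((\<lambda>x. Rep_cmat (f x) $ i $ j) \<longlongrightarrow> Rep_cmat L $ i $ j) F)"
proof
  assume "(f \<longlongrightarrow> L) F"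
  then have lim0: "((\<lambda>x. norm (f x - L)) \<longlongrightarrow> 0) F"
    by (metis Lim_null tendsto_norm_zero)
  show "\<forall>i j. ((\<lambda>x. Rep_cmat (f x) $ i $ j) \<longlongrightarrow> Rep_cmat L $ i $ j) F"
  proof (intro allI)
    fix i j
    have "((\<lambda>x. Rep_cmat (f x) $ i $ j - Rep_cmat L $ i $ j) \<longlongrightarrow> 0) F"
    proof (rule Lim_null_comparison[OF _ lim0])
      show "\<forall>\<^sub>F x in F. norm (Rep_cmat (f x) $ i $ j - Rep_cmat L $ i $ j) \<le> norm (f x - L)"
        using norm_Rep_cmat_entry_le[of "f _ - L" i j] by (simp add: minus_cmat.rep_eq)
    qed
    then show "((\<lambda>x. Rep_cmat (f x) $ i $ j) \<longlongrightarrow> Rep_cmat L $ i $ j) F"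
      by (simp add: Lim_null[symmetric])
  qed
next
  assume entries: "\<forall>i j. ((\<lambda>x. Rep_cmat (f x) $ i $ j) \<longlongrightarrow> Rep_cmat L $ i $ j) F"
  let ?g = "\<lambda>x. \<Sum>i\<in>UNIV. \<Sum>j\<in>UNIV. norm (Rep_cmat (f x) $ i $ j - Rep_cmat L $ i $ j)"
  have "(?g \<longlongrightarrow> (\<Sum>i\<in>(UNIV::'n set). \<Sum>j\<in>(UNIV::'n set). norm (Rep_cmat L $ i $ j - Rep_cmat L $ i $ j))) F"
    using entries by (intro tendsto_sum tendsto_norm tendsto_diff tendsto_const) auto
  then have "(?g \<longlongrightarrow> 0) F" by simp
  moreover have "\<forall>\<^sub>F x in F. norm (f x - L) \<le> ?g x"
    using norm_cmat_le_entry_sum[of "f _ - L"] by (simp add: minus_cmat.rep_eq)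
  ultimately have "((\<lambda>x. f x - L) \<longlongrightarrow> 0) F"
    by (rule Lim_null_comparison[rotated])
  then show "(f \<longlongrightarrow> L) F" by (simp add: Lim_null[symmetric])
qed

instance cmat :: (finite) banach
proof
  fix X :: "nat \<Rightarrow> 'a cmat"
  assume "Cauchy X"
  have "Cauchy (\<lambda>n. Rep_cmat (X n) $ i $ j)" for i j
  proof (rule metric_CauchyI)
    fix e :: real assume "e > 0"
    then obtain M where M: "\<forall>m\<ge>M. \<forall>n\<ge>M. dist (X m) (X n) < e"
      using \<open>Cauchy X\<close> metric_CauchyD by blast
    have "dist (Rep_cmat (X m) $ i $ j) (Rep_cmat (X n) $ i $ j) \<le> dist (X m) (X n)" for m n
      using norm_Rep_cmat_entry_le[of "X m - X n" i j] by (simp add: dist_norm minus_cmat.rep_eq)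
    with M show "\<exists>M. \<forall>m\<ge>M. \<forall>n\<ge>M. dist (Rep_cmat (X m) $ i $ j) (Rep_cmat (X n) $ i $ j) < e"
      by (meson le_less_trans)
  qed
  then have "\<exists>l. (\<lambda>n. Rep_cmat (X n) $ i $ j) \<longlonglongrightarrow> l" for i j
    using Cauchy_convergent_iff convergent_def by blast
  then obtain l where "\<And>i j. (\<lambda>n. Rep_cmat (X n) $ i $ j) \<longlonglongrightarrow> l i j"
    by metis
  then have "X \<longlonglongrightarrow> Abs_cmat (\<chi> i j. l i j)"
    by (simp add: tendsto_cmat_iff Abs_cmat_inverse)
  then show "convergent X" by (auto simp: convergent_def)
qed

lemma Rep_cmat_sum: "Rep_cmat (sum f A) = (\<Sum>a\<in>A. Rep_cmat (f a))"
  by (induction A rule: infinite_finite_induct) (simp_all add: zero_cmat.rep_eq plus_cmat.rep_eq)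

lemma Rep_cmat_power: "Rep_cmat (x ^ k) = mat_pow (Rep_cmat x) k"
  by (induction k) (simp_all add: mat_pow_def one_cmat.rep_eq times_cmat.rep_eq)

lemma Rep_cmat_exp: "Rep_cmat (exp x) = mat_exp (Rep_cmat x)"
proof -
  have "(\<lambda>n. \<Sum>k<n. x ^ k /\<^sub>R fact k) \<longlonglongrightarrow> exp x"
    using exp_converges[of x] by (simp add: sums_def)
  then have "(\<lambda>n. \<Sum>k<n. (inverse (fact k) :: real) *\<^sub>R mat_pow (Rep_cmat x) k) \<longlonglongrightarrow> Rep_cmat (exp x)"
    by (intro vec_tendstoI) (simp add: tendsto_cmat_iff Rep_cmat_sum scaleR_cmat.rep_eq Rep_cmat_power)
  then show ?thesis
    unfolding mat_exp_def sums_def[symmetric] by (rule sums_unique)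
qed

text \<open>\<open>'n cmat\<close> is only a real algebra; complex scalars act through multiples of the identity.\<close>

lift_definition cmat_scalar :: "complex \<Rightarrow> 'n::finite cmat" is mat .

lemma cmat_scalar_1 [simp]: "cmat_scalar 1 = 1"
  by transfer simp

lemma cmat_scalar_mult: "cmat_scalar a * cmat_scalar b = cmat_scalar (a * b)"
  by transfer (simp add: vec_eq_iff mat_matrix_mult_nth, simp add: mat_def)

lemma Rep_cmat_mult_scalar: "Rep_cmat (x * cmat_scalar c) $ i $ j = Rep_cmat x $ i $ j * c"
  by (simp add: times_cmat.rep_eq cmat_scalar.rep_eq matrix_mat_mult_nth)

lemma cmat_scalar_commute: "cmat_scalar c * x = x * cmat_scalar c"
  by transfer (simp add: vec_eq_iff mat_matrix_mult_nth matrix_mat_mult_nth mult.commute)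

lemma norm_cmat_scalar_le: "norm (cmat_scalar c :: 'n::finite cmat) \<le> cmod c"
  unfolding norm_cmat_def cmat_scalar.rep_eq
proof (rule onorm_le)
  fix v :: "complex^'n"
  show "norm (mat c *v v) \<le> cmod c * norm v"
    by (simp add: norm_vec_def mat_vector_mult_nth norm_mult L2_set_right_distrib)
qed

section \<open>The exponential in a Banach algebra\<close>

lemma commute_with_inverse:
  fixes a b x :: "'a::ring_1"
  assumes "a * b = 1" "b * a = 1" "a * x = x * a"
  shows "b * x = x * b"
proof -
  have "b * x = b * (x * a) * b"
    using assms(1) by (simp add: mult.assoc)
  also have "\<dots> = (b * a) * x * b"
    using assms(3) by (simp add: mult.assoc)
  finally show ?thesis
    using assms(2) by simp
qed

lemma norm_exp_minus_one_minus_le: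
  fixes Z :: "'a::{real_normed_algebra_1,banach}"
  assumes "norm Z < 1"
  shows "norm (exp Z - 1 - Z) \<le> norm Z ^ 2 / (1 - norm Z)"
proof -
  let ?r = "norm Z"
  have "exp Z - 1 - Z = (\<Sum>n. Z ^ (n + 2) /\<^sub>R fact (n + 2))"
    using exp_first_two_terms[of Z] by (simp add: algebra_simps)
  also have "norm \<dots> \<le> (\<Sum>n. ?r ^ 2 * ?r ^ n)"
  proof (rule norm_suminf_le)
    fix n
    have "inverse (fact (n + 2) :: real) \<le> inverse 1"
      by (rule le_imp_inverse_le) (rule fact_ge_1, simp)
    then have "norm (Z ^ (n + 2) /\<^sub>R fact (n + 2)) \<le> norm (Z ^ (n + 2))"
      using mult_right_mono[of "inverse (fact (n + 2))" 1 "norm (Z ^ (n + 2))"] by (simp del: fact_Suc)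
    also have "\<dots> \<le> ?r ^ 2 * ?r ^ n"
      using norm_power_ineq[of Z "n + 2"] by (simp add: power_add ac_simps power2_eq_square)
    finally show "norm (Z ^ (n + 2) /\<^sub>R fact (n + 2)) \<le> ?r ^ 2 * ?r ^ n" .
    show "summable (\<lambda>n. ?r ^ 2 * ?r ^ n)"
      using assms by (intro summable_mult summable_geometric) simp
  qed
  also have "\<dots> = ?r ^ 2 / (1 - ?r)"
    using assms by (simp add: suminf_mult suminf_geometric)
  finally show ?thesis .
qed

lemma exp_eq_one_small_imp_zero:
  fixes Z :: "'a::{real_normed_algebra_1,banach}"
  assumes "norm Z < 1/2" "exp Z = 1"
  shows "Z = 0"
proof (rule ccontr)
  assume "Z \<noteq> 0"
  let ?r = "norm Z"
  have r: "0 < ?r" "?r < 1/2" using assms \<open>Z \<noteq> 0\<close> by auto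
  have "?r = norm (exp Z - 1 - Z)" using assms by (simp add: norm_minus_commute)
  also have "\<dots> \<le> ?r ^ 2 / (1 - ?r)" using norm_exp_minus_one_minus_le[of Z] r by simp
  finally have "?r * (1 - ?r) \<le> ?r * ?r" using r by (simp add: field_simps power2_eq_square)
  then show False using r by simp
qed

lemma norm_commutator_power_le:
  fixes X Y :: "'a::real_normed_algebra_1"
  shows "norm (X * Y ^ Suc n - Y ^ Suc n * X) \<le> (real n + 1) * norm Y ^ n * norm (X * Y - Y * X)"
proof (induction n)
  case 0
  then show ?case by simp
next
  case (Suc n)
  let ?C = "\<lambda>n. X * Y ^ n - Y ^ n * X"
  have "?C (Suc (Suc n)) = ?C (Suc n) * Y + Y ^ Suc n * (X * Y - Y * X)"
    by (simp only: power_Suc2[of Y "Suc n"]) (simp add: ring_distribs mult.assoc)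
  then have "norm (?C (Suc (Suc n))) \<le> norm (?C (Suc n)) * norm Y + norm Y ^ Suc n * norm (X * Y - Y * X)"
    by (metis order_trans[OF norm_triangle_ineq add_mono[OF norm_mult_ineq
          order_trans[OF norm_mult_ineq mult_right_mono[OF norm_power_ineq norm_ge_zero]]]])
  also have "\<dots> \<le> (real n + 1) * norm Y ^ n * norm (X * Y - Y * X) * norm Y + norm Y ^ Suc n * norm (X * Y - Y * X)"
    using Suc by (intro add_mono mult_right_mono) auto
  also have "\<dots> = (real (Suc n) + 1) * norm Y ^ Suc n * norm (X * Y - Y * X)"
    by (simp add: algebra_simps)
  finally show ?case .
qed

lemma commutator_exp_sums:
  fixes X Y :: "'a::{real_normed_algebra_1,banach}"
  shows "(\<lambda>n. (X * Y ^ n - Y ^ n * X) /\<^sub>R fact n) sums (X * exp Y - exp Y * X)"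
proof -
  have "(\<lambda>n. X * (Y ^ n /\<^sub>R fact n) - (Y ^ n /\<^sub>R fact n) * X) sums (X * exp Y - exp Y * X)"
    by (intro sums_diff sums_mult sums_mult2 exp_converges)
  then show ?thesis
    by (simp add: scaleR_diff_right)
qed

text \<open>\<open>X exp Y - exp Y X = [X,Y] + (\<Sum>n\<ge>2. [X,Y\<^sup>n] / n!)\<close>, and the sum has norm at most
  \<open>\<parallel>[X,Y]\<parallel> \<parallel>Y\<parallel> / (1 - \<parallel>Y\<parallel>)\<close>, which is less than \<open>\<parallel>[X,Y]\<parallel>\<close> unless \<open>[X,Y] = 0\<close>.\<close>

lemma commute_with_exp_imp_commute:
  fixes X Y :: "'a::{real_normed_algebra_1,banach}"
  assumes small: "norm Y < 1/2" and XY: "X * exp Y = exp Y * X"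
  shows "X * Y = Y * X"
proof -
  define D where "D = X * Y - Y * X"
  define C where "C n = X * Y ^ n - Y ^ n * X" for n
  let ?r = "norm Y"
  have "(\<lambda>n. C n /\<^sub>R fact n) sums 0"
    using commutator_exp_sums[of X Y] XY by (simp add: C_def)
  then have "(\<lambda>i. C (i + 2) /\<^sub>R fact (i + 2)) sums (- (\<Sum>i<2. C i /\<^sub>R fact i))"
    by (subst sums_iff_shift) simp
  then have tail: "(\<lambda>i. C (i + 2) /\<^sub>R fact (i + 2)) sums (- D)"
    by (simp add: C_def D_def eval_nat_numeral)
  have "norm (- D) \<le> (\<Sum>i. norm D * ?r * ?r ^ i)"
    unfolding sums_unique[OF tail]
  proof (rule norm_suminf_le)
    fix i
    have "real (i + 2) \<le> fact (i + 2)"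
      by (metis fact_ge_self of_nat_fact of_nat_le_iff)
    have "norm (C (i + 2) /\<^sub>R fact (i + 2)) = norm (C (Suc (i + 1))) / fact (i + 2)"
      by (simp add: divide_inverse mult.commute)
    also have "\<dots> \<le> ((real (i + 1) + 1) * ?r ^ (i + 1) * norm D) / fact (i + 2)"
      unfolding C_def D_def by (intro divide_right_mono norm_commutator_power_le) simp
    also have "\<dots> \<le> (fact (i + 2) * ?r ^ (i + 1) * norm D) / fact (i + 2)"
      using \<open>real (i + 2) \<le> fact (i + 2)\<close> by (intro divide_right_mono mult_right_mono) auto
    also have "\<dots> = norm D * ?r * ?r ^ i"
      by (simp add: mult.commute mult.left_commute)
    finally show "norm (C (i + 2) /\<^sub>R fact (i + 2)) \<le> norm D * ?r * ?r ^ i" .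
    show "summable (\<lambda>i. norm D * ?r * ?r ^ i)"
      using small by (intro summable_mult summable_geometric) simp
  qed
  also have "\<dots> = norm D * ?r / (1 - ?r)"
    using small by (simp add: suminf_mult suminf_geometric)
  finally have "norm D * (1 - 2 * ?r) \<le> 0"
    using small by (simp add: field_simps)
  then have "norm D = 0"
    using small by (simp add: mult_le_0_iff)
  then show ?thesis by (simp add: D_def)
qed

lemma exp_inj_small:
  fixes X Y :: "'a::{real_normed_algebra_1,banach}"
  assumes "norm X < 1/4" "norm Y < 1/4" "exp X = exp Y"
  shows "X = Y"
proof -
  have "X * exp Y = exp Y * X"
    using exp_times_arg_commute[of X] assms(3) by simp
  then have commute: "X * Y = Y * X"
    by (rule commute_with_exp_imp_commute[rotated]) (use assms(2) in simp)
  have "exp (X - Y) = exp X * exp (- Y)"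
    using exp_add_commuting[of X "- Y"] commute by simp
  also have "\<dots> = 1"
    using exp_add_commuting[of Y "- Y"] assms(3) by simp
  finally have "exp (X - Y) = 1" .
  moreover have "norm (X - Y) < 1/2"
    using norm_triangle_ineq4[of X Y] assms(1,2) by linarith
  ultimately have "X - Y = 0"
    by (rule exp_eq_one_small_imp_zero[rotated])
  then show ?thesis by simp
qed

lemma tendsto_exp_remainder_mult_zero:
  fixes d c :: "'b \<Rightarrow> 'a::{real_normed_algebra_1,banach}"
  assumes d: "(d \<longlongrightarrow> 0) F" and bounded: "\<forall>\<^sub>F u in F. norm (d u) * norm (c u) \<le> K"
  shows "((\<lambda>u. (exp (d u) - 1 - d u) * c u) \<longlongrightarrow> 0) F"
proof (rule Lim_null_comparison)
  have nd: "((\<lambda>u. norm (d u)) \<longlongrightarrow> 0) F"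
    using d by (simp add: tendsto_norm_zero)
  have "\<forall>\<^sub>F u in F. norm (d u) < 1/2"
    using nd by (rule order_tendstoD) simp
  with bounded show "\<forall>\<^sub>F u in F. norm ((exp (d u) - 1 - d u) * c u) \<le> norm (d u) * K / (1 - norm (d u))"
  proof eventually_elim
    case (elim u)
    have "norm (exp (d u) - 1 - d u) \<le> norm (d u) ^ 2 / (1 - norm (d u))"
      using elim by (intro norm_exp_minus_one_minus_le) simp
    then have "norm ((exp (d u) - 1 - d u) * c u) \<le> norm (d u) ^ 2 / (1 - norm (d u)) * norm (c u)"
      by (rule order_trans[OF norm_mult_ineq mult_right_mono]) simp
    also have "\<dots> = norm (d u) * (norm (d u) * norm (c u)) / (1 - norm (d u))"
      by (simp add: power2_eq_square)
    also have "\<dots> \<le> norm (d u) * K / (1 - norm (d u))"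
      using elim by (intro divide_right_mono mult_left_mono) auto
    finally show ?case .
  qed
  have "((\<lambda>u. norm (d u) * K / (1 - norm (d u))) \<longlongrightarrow> 0 * K / (1 - 0)) F"
    by (intro tendsto_intros nd) simp
  then show "((\<lambda>u. norm (d u) * K / (1 - norm (d u))) \<longlongrightarrow> 0) F"
    by simp
qed

section \<open>Complex derivatives of matrix-valued functions\<close>

definition has_cmat_derivative :: "(complex \<Rightarrow> 'n::finite cmat) \<Rightarrow> 'n cmat \<Rightarrow> complex \<Rightarrow> bool" where
  "has_cmat_derivative f D z \<longleftrightarrow>
     ((\<lambda>u. (f u - f z) * cmat_scalar (inverse (u - z))) \<longlongrightarrow> D) (at z)"

lemma has_cmat_derivative_iff:
  "has_cmat_derivative f D z \<longleftrightarrow>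
     (\<forall>i j. ((\<lambda>u. Rep_cmat (f u) $ i $ j) has_field_derivative Rep_cmat D $ i $ j) (at z))"
  unfolding has_cmat_derivative_def tendsto_cmat_iff has_field_derivative_iff
  by (simp add: Rep_cmat_mult_scalar minus_cmat.rep_eq divide_inverse)

lemma has_cmat_derivative_imp_tendsto:
  assumes "has_cmat_derivative f D z"
  shows "(f \<longlongrightarrow> f z) (at z)"
  unfolding tendsto_cmat_iff
proof (intro allI)
  fix i j
  have "((\<lambda>u. Rep_cmat (f u) $ i $ j) has_field_derivative Rep_cmat D $ i $ j) (at z)"
    using assms by (simp add: has_cmat_derivative_iff)
  then show "((\<lambda>u. Rep_cmat (f u) $ i $ j) \<longlongrightarrow> Rep_cmat (f z) $ i $ j) (at z)"
    using DERIV_isCont isCont_def by blast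
qed

lemma has_cmat_derivative_const: "has_cmat_derivative (\<lambda>u. c) 0 z"
  by (simp add: has_cmat_derivative_def)

lemma has_cmat_derivative_diff:
  "has_cmat_derivative f Df z \<Longrightarrow> has_cmat_derivative g Dg z \<Longrightarrow>
     has_cmat_derivative (\<lambda>u. f u - g u) (Df - Dg) z"
  by (simp add: has_cmat_derivative_iff minus_cmat.rep_eq DERIV_diff)

lemma has_cmat_derivative_minus:
  "has_cmat_derivative f Df z \<Longrightarrow> has_cmat_derivative (\<lambda>u. - f u) (- Df) z"
  by (simp add: has_cmat_derivative_iff uminus_cmat.rep_eq DERIV_minus)

lemma has_cmat_derivative_mult:
  assumes f: "has_cmat_derivative f Df z" and g: "has_cmat_derivative g Dg z"
  shows "has_cmat_derivative (\<lambda>u. f u * g u) (Df * g z + f z * Dg) z"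
proof -
  have quotient: "(f u * g u - f z * g z) * cmat_scalar c =
      ((f u - f z) * cmat_scalar c) * g u + f z * ((g u - g z) * cmat_scalar c)" for u c
    by (simp add: algebra_simps mult.assoc cmat_scalar_commute[of c "g u"])
  have "((\<lambda>u. ((f u - f z) * cmat_scalar (inverse (u - z))) * g u +
              f z * ((g u - g z) * cmat_scalar (inverse (u - z)))) \<longlongrightarrow> Df * g z + f z * Dg) (at z)"
    using f g has_cmat_derivative_imp_tendsto[OF g] unfolding has_cmat_derivative_def
    by (intro tendsto_intros)
  then show ?thesis
    unfolding has_cmat_derivative_def quotient .
qed

lemma has_cmat_derivative_unique:
  "has_cmat_derivative f D z \<Longrightarrow> has_cmat_derivative f D' z \<Longrightarrow> D = D'"
  unfolding has_cmat_derivative_def by (rule tendsto_unique[OF at_neq_bot])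

lemma has_cmat_derivative_transform:
  assumes "has_cmat_derivative f D z" "\<forall>\<^sub>F u in at z. f u = g u" "f z = g z"
  shows "has_cmat_derivative g D z"
  using assms(1) unfolding has_cmat_derivative_def
  by (rule Lim_transform_eventually) (use assms(2,3) in \<open>auto elim: eventually_mono\<close>)

lemma has_cmat_derivative_commute:
  assumes "has_cmat_derivative f D z" and "\<forall>\<^sub>F u in nhds z. f u * c = c * f u"
  shows "D * c = c * D"
proof -
  let ?g = "\<lambda>u. f u * c - c * f u"
  have "has_cmat_derivative ?g (D * c + f z * 0 - (0 * f z + c * D)) z"
    by (intro has_cmat_derivative_diff has_cmat_derivative_mult has_cmat_derivative_const assms(1))
  moreover have "has_cmat_derivative ?g 0 z"
  proof (rule has_cmat_derivative_transform[OF has_cmat_derivative_const])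
    show "\<forall>\<^sub>F u in at z. 0 = ?g u"
      using assms(2) by (auto simp: eventually_at_filter elim: eventually_mono)
    show "0 = ?g z"
      using eventually_nhds_x_imp_x[OF assms(2)] by simp
  qed
  ultimately have "D * c - c * D = 0"
    by (auto dest: has_cmat_derivative_unique)
  then show ?thesis by simp
qed

lemma has_cmat_derivative_zero_constant:
  assumes "connected S" "open S" "\<And>z. z \<in> S \<Longrightarrow> has_cmat_derivative f 0 z" "a \<in> S" "b \<in> S"
  shows "f b = f a"
proof -
  have "Rep_cmat (f b) $ i $ j = Rep_cmat (f a) $ i $ j" for i j
  proof -
    have "(\<lambda>u. Rep_cmat (f u) $ i $ j) constant_on S"
      using assms(1-3) by (intro has_field_derivative_0_imp_constant_on)
        (auto simp: has_cmat_derivative_iff zero_cmat.rep_eq)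
    then show ?thesis
      using assms(4,5) unfolding constant_on_def by metis
  qed
  then show ?thesis by (simp add: Rep_cmat_inject[symmetric] vec_eq_iff)
qed

lemma commute_propagates_from_derivative:
  assumes "connected S" "open S" "\<And>u. u \<in> S \<Longrightarrow> has_cmat_derivative h (h' u) u"
    and "\<And>u. u \<in> S \<Longrightarrow> h' u * c = c * h' u" "a \<in> S" "h a * c = c * h a" "w \<in> S"
  shows "h w * c = c * h w"
proof -
  let ?g = "\<lambda>u. h u * c - c * h u"
  have "?g w = ?g a"
  proof (rule has_cmat_derivative_zero_constant[OF assms(1,2) _ assms(5,7)])
    fix u assume "u \<in> S"
    then have "has_cmat_derivative ?g (h' u * c + h u * 0 - (0 * h u + c * h' u)) u"
      by (intro has_cmat_derivative_diff has_cmat_derivative_mult has_cmat_derivative_const assms(3))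
    then show "has_cmat_derivative ?g 0 u"
      using assms(4)[OF \<open>u \<in> S\<close>] by simp
  qed
  then show ?thesis using assms(6) by simp
qed

lemma has_cmat_derivative_bounded_quotient:
  assumes "has_cmat_derivative g D z"
  shows "\<forall>\<^sub>F u in at z. norm (g u - g z) * norm (cmat_scalar (inverse (u - z)) :: 'n::finite cmat) \<le> norm D + 1"
proof -
  define Q where "Q u = (g u - g z) * cmat_scalar (inverse (u - z))" for u
  have "\<forall>\<^sub>F u in at z. norm (Q u) < norm D + 1"
    using tendsto_norm[OF assms[unfolded has_cmat_derivative_def Q_def[symmetric]]]
    by (rule order_tendstoD) simp
  with eventually_neq_at_within[of z z UNIV] show ?thesis
  proof eventually_elim
    case (elim u)
    have "g u - g z = Q u * cmat_scalar (u - z)"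
      using elim by (simp add: Q_def mult.assoc cmat_scalar_mult)
    then have "norm (g u - g z) \<le> norm (Q u) * cmod (u - z)"
      by (metis order_trans[OF norm_mult_ineq mult_left_mono[OF norm_cmat_scalar_le norm_ge_zero]])
    moreover have "norm (cmat_scalar (inverse (u - z)) :: 'n cmat) \<le> inverse (cmod (u - z))"
      using norm_cmat_scalar_le[of "inverse (u - z)"] by (simp add: norm_inverse)
    ultimately have "norm (g u - g z) * norm (cmat_scalar (inverse (u - z)) :: 'n cmat) \<le>
        norm (Q u) * cmod (u - z) * inverse (cmod (u - z))"
      by (intro mult_mono) auto
    also have "\<dots> = norm (Q u)"
      using elim by simp
    finally show ?case
      using elim by simp
  qed
qed

lemma has_cmat_derivative_exp:
  fixes g :: "complex \<Rightarrow> 'n::finite cmat"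
  assumes g: "has_cmat_derivative g D z" and comm: "\<forall>\<^sub>F u in at z. g u * g z = g z * g u"
  shows "has_cmat_derivative (\<lambda>u. exp (g u)) (exp (g z) * D) z"
proof -
  define c :: "complex \<Rightarrow> 'n cmat" where "c u = cmat_scalar (inverse (u - z))" for u
  define Q where "Q u = (g u - g z) * c u" for u
  have Q: "(Q \<longlongrightarrow> D) (at z)"
    using g unfolding has_cmat_derivative_def Q_def c_def .
  have "((\<lambda>u. g u - g z) \<longlongrightarrow> 0) (at z)"
    using has_cmat_derivative_imp_tendsto[OF g] by (simp add: Lim_null[symmetric])
  then have R: "((\<lambda>u. (exp (g u - g z) - 1 - (g u - g z)) * c u) \<longlongrightarrow> 0) (at z)"
    using has_cmat_derivative_bounded_quotient[OF g] unfolding c_def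
    by (rule tendsto_exp_remainder_mult_zero)
  have "((\<lambda>u. exp (g z) * (Q u + (exp (g u - g z) - 1 - (g u - g z)) * c u))
          \<longlongrightarrow> exp (g z) * (D + 0)) (at z)"
    by (intro tendsto_intros Q R)
  moreover have "\<forall>\<^sub>F u in at z. exp (g z) * (Q u + (exp (g u - g z) - 1 - (g u - g z)) * c u) =
                   (exp (g u) - exp (g z)) * c u"
    using comm
  proof eventually_elim
    case (elim u)
    then have "exp (g u) = exp (g z) * exp (g u - g z)"
      using exp_add_commuting[of "g z" "g u - g z"] by (simp add: algebra_simps)
    then show ?case by (simp add: Q_def algebra_simps)
  qed
  ultimately show ?thesis
    unfolding has_cmat_derivative_def c_def[symmetric] by (simp add: tendsto_cong)
qed

lemma tendsto_Abs_cmat_holomorphic: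
  fixes K :: "complex \<Rightarrow> complex^'n::finite^'n"
  assumes "\<And>i j. (\<lambda>z. K z $ i $ j) holomorphic_on S" "open S" "a \<in> S"
  shows "((\<lambda>z. Abs_cmat (K z)) \<longlongrightarrow> Abs_cmat (K a)) (nhds a)"
proof -
  have "isCont (\<lambda>z. K z $ i $ j) a" for i j
    using holomorphic_on_imp_continuous_on[OF assms(1)] assms(2,3)
    by (simp add: continuous_on_eq_continuous_at)
  then show ?thesis
    by (simp add: tendsto_nhds_iff tendsto_cmat_iff Abs_cmat_inverse isCont_def)
qed

lemma det_holomorphic_on:
  fixes M :: "complex \<Rightarrow> complex^'n^'n"
  assumes "\<And>i j. (\<lambda>w. M w $ i $ j) holomorphic_on S"
  shows "(\<lambda>w. det (M w)) holomorphic_on S"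
  unfolding det_def using assms by (intro holomorphic_intros)

lemma adjugate_holomorphic_on:
  fixes M :: "complex \<Rightarrow> complex^'n^'n"
  assumes "\<And>i j. (\<lambda>w. M w $ i $ j) holomorphic_on S"
  shows "(\<lambda>w. adjugate (M w) $ k $ j) holomorphic_on S"
  unfolding adjugate_def vec_lambda_beta
proof (rule det_holomorphic_on)
  fix i l
  show "(\<lambda>w. (\<chi> i l. if l = k then (if i = j then 1 else 0) else M w $ i $ l) $ i $ l) holomorphic_on S"
    by (cases "l = k"; cases "i = j") (auto simp: assms)
qed

lemma matrix_inv_holomorphic_on:
  fixes M :: "complex \<Rightarrow> complex^'n^'n"
  assumes "\<And>i j. (\<lambda>w. M w $ i $ j) holomorphic_on S" "\<And>w. w \<in> S \<Longrightarrow> det (M w) \<noteq> 0"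
  shows "(\<lambda>w. matrix_inv (M w) $ k $ j) holomorphic_on S"
proof -
  have "(\<lambda>w. adjugate (M w) $ k $ j / det (M w)) holomorphic_on S"
    using assms by (intro holomorphic_intros adjugate_holomorphic_on det_holomorphic_on)
  then show ?thesis
    by (rule holomorphic_transform) (simp add: matrix_inv_nth assms(2))
qed

lemma poly_det: "poly (det P) w = det (\<chi> i j. poly (P $ i $ j) w)"
  for P :: "complex poly^'n^'n"
  unfolding det_def by (simp add: poly_sum poly_prod)

lemma eventually_at_notin_finite: "finite A \<Longrightarrow> \<forall>\<^sub>F w in at (z::'a::t1_space). w \<notin> A"
  using islimpt_finite islimpt_iff_eventually by blast

lemma mem_ray_self: "\<alpha> \<in> ray \<alpha>"
  unfolding ray_def by (rule CollectI, rule exI[of _ 1]) simp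

lemma closed_ray:
  assumes "\<alpha> \<noteq> 0"
  shows "closed (ray \<alpha>)"
proof -
  have "ray \<alpha> = {z. Im (z / \<alpha>) = 0} \<inter> {z. 1 \<le> Re (z / \<alpha>)}"
  proof (intro set_eqI iffI)
    fix z assume "z \<in> ray \<alpha>"
    then obtain t where "z = complex_of_real t * \<alpha>" "t \<ge> 1"
      by (auto simp: ray_def)
    then show "z \<in> {z. Im (z / \<alpha>) = 0} \<inter> {z. 1 \<le> Re (z / \<alpha>)}"
      using assms by simp
  next
    fix z assume z: "z \<in> {z. Im (z / \<alpha>) = 0} \<inter> {z. 1 \<le> Re (z / \<alpha>)}"
    then have "z = complex_of_real (Re (z / \<alpha>)) * \<alpha>"
      using assms by (metis (mono_tags, lifting) Int_iff complex_is_Real_iff mem_Collect_eq nonzero_eq_divide_eq of_real_Re)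
    then show "z \<in> ray \<alpha>"
      using z unfolding ray_def by blast
  qed
  moreover have "closed {z. Im (z / \<alpha>) = 0}"
    by (intro closed_Collect_eq continuous_intros) (use assms in auto)
  moreover have "closed {z. 1 \<le> Re (z / \<alpha>)}"
    by (intro closed_Collect_le continuous_intros) (use assms in auto)
  ultimately show ?thesis by (simp add: closed_Int)
qed

lemma closed_Union_rays: "finite A \<Longrightarrow> 0 \<notin> A \<Longrightarrow> closed (\<Union>\<alpha>\<in>A. ray \<alpha>)"
  by (intro closed_UN) (auto intro: closed_ray)

lemma zero_notin_Union_rays: "0 \<notin> A \<Longrightarrow> 0 \<notin> (\<Union>\<alpha>\<in>A. ray \<alpha>)"
  by (auto simp: ray_def)

lemma starlike_compl_Union_rays:
  assumes "0 \<notin> A"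
  shows "starlike (- (\<Union>\<alpha>\<in>A. ray \<alpha>))"
  unfolding starlike_def
proof (intro bexI ballI subsetI)
  show "0 \<in> - (\<Union>\<alpha>\<in>A. ray \<alpha>)"
    using zero_notin_Union_rays[OF assms] by simp
  fix x y assume x: "x \<in> - (\<Union>\<alpha>\<in>A. ray \<alpha>)" and "y \<in> closed_segment 0 x"
  then obtain u :: real where u: "0 \<le> u" "u \<le> 1" "y = u *\<^sub>R x"
    by (auto simp: closed_segment_def)
  show "y \<in> - (\<Union>\<alpha>\<in>A. ray \<alpha>)"
  proof
    assume "y \<in> (\<Union>\<alpha>\<in>A. ray \<alpha>)"
    then obtain \<alpha> t where \<alpha>: "\<alpha> \<in> A" "t \<ge> 1" "y = complex_of_real t * \<alpha>"
      by (auto simp: ray_def)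
    then have "u \<noteq> 0" "\<alpha> \<noteq> 0"
      using u assms by auto
    then have "x = complex_of_real (t / u) * \<alpha>" and "t / u \<ge> 1"
      using \<alpha> u by (auto simp: scaleR_conv_of_real field_simps)
    then have "x \<in> ray \<alpha>"
      unfolding ray_def by blast
    then show False using x \<alpha>(1) by blast
  qed
qed

section \<open>The logarithm of a commuting rational matrix function\<close>

locale commuting_rational_matrix =
  fixes \<psi> :: "complex \<Rightarrow> complex^'n^'n" and P :: "complex poly^'n^'n" and q :: "complex poly"
  assumes q_nonzero: "q \<noteq> 0"
    and psi_quotient: "\<And>w. poly q w \<noteq> 0 \<Longrightarrow> \<psi> w = (\<chi> i j. poly (P $ i $ j) w / poly q w)"
    and regular: "\<And>z. \<not> mat_pole \<psi> z \<Longrightarrow> isCont \<psi> z"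
    and regular_0: "\<not> mat_pole \<psi> 0"
    and psi_0: "\<psi> 0 = mat 1"
    and commute: "\<And>w w'. \<not> mat_pole \<psi> w \<Longrightarrow> \<not> mat_pole \<psi> w' \<Longrightarrow> \<psi> w ** \<psi> w' = \<psi> w' ** \<psi> w"
begin

definition poles :: "complex set" where "poles = {z. mat_pole \<psi> z}"

lemma finite_roots_q: "finite {w. poly q w = 0}"
  using q_nonzero by (rule poly_roots_finite)

lemma entries_holomorphic_off_roots: "(\<lambda>w. \<psi> w $ i $ j) holomorphic_on {w. poly q w \<noteq> 0}"
proof -
  have "(\<lambda>w. poly (P $ i $ j) w / poly q w) holomorphic_on {w. poly q w \<noteq> 0}"
    by (intro holomorphic_intros) auto
  then show ?thesis
    by (rule holomorphic_transform) (simp add: psi_quotient)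
qed

lemma poles_subset_roots: "poles \<subseteq> {w. poly q w = 0}"
proof
  fix z assume "z \<in> poles"
  then obtain i j where "is_pole (\<lambda>w. \<psi> w $ i $ j) z"
    by (auto simp: poles_def mat_pole_def)
  moreover have "open {w. poly q w \<noteq> 0}"
    using finite_roots_q by (simp add: Collect_neg_eq finite_imp_closed open_Compl)
  ultimately show "z \<in> {w. poly q w = 0}"
    using not_is_pole_holomorphic[OF _ _ entries_holomorphic_off_roots] by blast
qed

lemma finite_poles: "finite poles"
  using poles_subset_roots finite_roots_q finite_subset by blast

lemma open_nonpoles: "open (- poles)"
  using finite_poles by (simp add: finite_imp_closed open_Compl)

text \<open>At a root of \<open>q\<close> that is not a pole, \<open>\<psi>\<close> is continuous by assumption, so the singularity is removable.\<close>

lemma entries_holomorphic: "(\<lambda>w. \<psi> w $ i $ j) holomorphic_on - poles"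
proof (rule no_isolated_singularity'[where K = "{w. poly q w = 0} - poles"])
  fix z assume "z \<in> {w. poly q w = 0} - poles"
  then have "isCont \<psi> z"
    using regular by (simp add: poles_def)
  then have "isCont (\<lambda>w. \<psi> w $ i $ j) z"
    unfolding isCont_def by (intro tendsto_vec_nth)
  then show "((\<lambda>w. \<psi> w $ i $ j) \<longlongrightarrow> \<psi> z $ i $ j) (at z within - poles)"
    by (metis continuous_at_imp_continuous_within continuous_within)
next
  have "- poles - ({w. poly q w = 0} - poles) = {w. poly q w \<noteq> 0}"
    using poles_subset_roots by blast
  then show "(\<lambda>w. \<psi> w $ i $ j) holomorphic_on - poles - ({w. poly q w = 0} - poles)"
    using entries_holomorphic_off_roots by simp
qed (use open_nonpoles finite_roots_q in auto)

lemma det_holomorphic: "(\<lambda>w. det (\<psi> w)) holomorphic_on - poles"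
  by (rule det_holomorphic_on) (rule entries_holomorphic)

lemma det_times_power_q: "poly q w \<noteq> 0 \<Longrightarrow> det (\<psi> w) * poly q w ^ CARD('n) = poly (det P) w"
  using det_divide_entries[of "poly q w" "\<lambda>i j. poly (P $ i $ j) w"]
  by (simp add: psi_quotient poly_det)

text \<open>\<open>det \<psi>\<close> is rational with numerator \<open>det P\<close>; this numerator is nonzero because \<open>det (\<psi> 0) = 1\<close>.\<close>

lemma det_P_nonzero: "det P \<noteq> 0"
proof
  assume "det P = 0"
  have "isCont (\<lambda>w. det (\<psi> w)) 0"
    using holomorphic_on_imp_continuous_on[OF det_holomorphic] open_nonpoles regular_0
    by (simp add: poles_def continuous_on_eq_continuous_at)
  then have "\<forall>\<^sub>F w in at 0. det (\<psi> w) \<noteq> 0"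
    by (intro tendsto_imp_eventually_ne[of _ 1]) (simp_all add: isCont_def psi_0)
  moreover have "\<forall>\<^sub>F w in at 0. w \<notin> {w. poly q w = 0}"
    using finite_roots_q by (rule eventually_at_notin_finite)
  ultimately have "\<forall>\<^sub>F w in at (0::complex). det (\<psi> w) \<noteq> 0 \<and> poly q w \<noteq> 0"
    by eventually_elim auto
  then obtain w where "det (\<psi> w) \<noteq> 0" "poly q w \<noteq> 0"
    using eventually_happens'[OF at_neq_bot] by blast
  then show False
    using det_times_power_q[of w] \<open>det P = 0\<close> by simp
qed

lemma finite_roots_det_P: "finite {w. poly (det P) w = 0}"
  using det_P_nonzero by (rule poly_roots_finite)

lemma det_nonzero_off_roots: "poly q w \<noteq> 0 \<Longrightarrow> poly (det P) w \<noteq> 0 \<Longrightarrow> det (\<psi> w) \<noteq> 0"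
  using det_times_power_q[of w] by auto

lemma pole_set_subset_roots: "pole_set \<psi> \<subseteq> {w. poly q w = 0} \<union> {w. poly (det P) w = 0}"
proof
  fix z assume z: "z \<in> pole_set \<psi>"
  define V where "V = - ({w. poly q w = 0} \<union> {w. poly (det P) w = 0})"
  have "open V"
    unfolding V_def using finite_roots_q finite_roots_det_P by (intro open_Compl finite_imp_closed) simp
  moreover have "V \<subseteq> - poles"
    using poles_subset_roots by (auto simp: V_def)
  ultimately have "(\<lambda>w. matrix_inv (\<psi> w) $ k $ j) holomorphic_on V" for k j
    by (intro matrix_inv_holomorphic_on holomorphic_on_subset[OF entries_holomorphic])
      (auto simp: V_def det_nonzero_off_roots)
  then have "z \<in> V \<Longrightarrow> \<not> mat_pole (\<lambda>w. matrix_inv (\<psi> w)) z"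
    using not_is_pole_holomorphic[OF \<open>open V\<close>] by (auto simp: mat_pole_def)
  moreover have "z \<in> V \<Longrightarrow> \<not> mat_pole \<psi> z"
    using \<open>V \<subseteq> - poles\<close> by (auto simp: poles_def)
  ultimately show "z \<in> {w. poly q w = 0} \<union> {w. poly (det P) w = 0}"
    using z by (auto simp: pole_set_def V_def)
qed

lemma finite_pole_set: "finite (pole_set \<psi>)"
  using pole_set_subset_roots finite_roots_q finite_roots_det_P finite_subset by blast

definition \<Omega> :: "complex set" where "\<Omega> = - Yset \<psi>"

lemma zero_notin_pole_set: "0 \<notin> pole_set \<psi>"
  by (simp add: pole_set_def)

lemma open_\<Omega>: "open \<Omega>"
  unfolding \<Omega>_def Yset_def
  using closed_Union_rays[OF finite_pole_set zero_notin_pole_set] by (rule open_Compl)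

lemma starlike_\<Omega>: "starlike \<Omega>"
  unfolding \<Omega>_def Yset_def by (rule starlike_compl_Union_rays[OF zero_notin_pole_set])

lemma connected_\<Omega>: "connected \<Omega>"
  using starlike_\<Omega> by (rule starlike_imp_connected)

lemma zero_in_\<Omega>: "0 \<in> \<Omega>"
  unfolding \<Omega>_def Yset_def using zero_notin_Union_rays[OF zero_notin_pole_set] by simp

lemma notin_pole_set: "z \<in> \<Omega> \<Longrightarrow> z \<notin> pole_set \<psi>"
  using mem_ray_self[of z] by (auto simp: \<Omega>_def Yset_def)

lemma \<Omega>_subset_nonpoles: "\<Omega> \<subseteq> - poles"
  using notin_pole_set regular_0 zero_notin_pole_set by (auto simp: pole_set_def poles_def)

text \<open>The entries of \<open>\<psi>\<^sup>-\<^sup>1\<close> are meromorphic (adjugate over determinant), and points of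
  \<open>\<Omega> - {0}\<close> are not poles of them.\<close>

lemma inverse_entries_have_limits:
  assumes "z \<in> \<Omega>" "z \<noteq> 0"
  shows "\<exists>L. ((\<lambda>w. matrix_inv (\<psi> w) $ k $ j) \<longlongrightarrow> L) (at z)"
proof -
  have z: "z \<in> - poles"
    using assms(1) \<Omega>_subset_nonpoles by blast
  have adj: "(\<lambda>w. adjugate (\<psi> w) $ k $ j) holomorphic_on - poles"
    by (rule adjugate_holomorphic_on) (rule entries_holomorphic)
  have "not_essential (\<lambda>w. adjugate (\<psi> w) $ k $ j / det (\<psi> w)) z"
    using adj det_holomorphic z open_nonpoles
    by (intro not_essential_divide not_essential_holomorphic isolated_singularity_at_holomorphic)
      (auto elim: holomorphic_on_subset)
  moreover have "\<forall>\<^sub>F w in at z. adjugate (\<psi> w) $ k $ j / det (\<psi> w) = matrix_inv (\<psi> w) $ k $ j"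
    using eventually_at_notin_finite[OF finite_roots_q] eventually_at_notin_finite[OF finite_roots_det_P]
    by eventually_elim (simp add: matrix_inv_nth det_nonzero_off_roots)
  ultimately have "not_essential (\<lambda>w. matrix_inv (\<psi> w) $ k $ j) z"
    by (rule not_essential_transform)
  moreover have "\<not> is_pole (\<lambda>w. matrix_inv (\<psi> w) $ k $ j) z"
    using notin_pole_set[OF assms(1)] assms(2) by (auto simp: pole_set_def mat_pole_def)
  ultimately show ?thesis
    by (auto simp: not_essential_def)
qed

lemma det_nonzero: "z \<in> \<Omega> \<Longrightarrow> det (\<psi> z) \<noteq> 0"
proof (cases "z = 0")
  case True
  then show ?thesis by (simp add: psi_0)
next
  case False
  assume z: "z \<in> \<Omega>"
  obtain L where L: "\<And>k j. ((\<lambda>w. matrix_inv (\<psi> w) $ k $ j) \<longlongrightarrow> L k j) (at z)"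
    using inverse_entries_have_limits[OF z False] by metis
  have inv_lim: "((\<lambda>w. matrix_inv (\<psi> w)) \<longlongrightarrow> (\<chi> k j. L k j)) (at z)"
    by (intro vec_tendstoI) (simp add: L)
  have "isCont \<psi> z"
    using z \<Omega>_subset_nonpoles regular by (auto simp: poles_def)
  then have "((\<lambda>w. \<psi> w ** matrix_inv (\<psi> w)) \<longlongrightarrow> \<psi> z ** (\<chi> k j. L k j)) (at z)"
    unfolding isCont_def using inv_lim by (rule tendsto_matrix_mult)
  moreover have "\<forall>\<^sub>F w in at z. \<psi> w ** matrix_inv (\<psi> w) = mat 1"
    using eventually_at_notin_finite[OF finite_roots_q] eventually_at_notin_finite[OF finite_roots_det_P]
    by eventually_elim (simp add: matrix_inv_right invertible_det_nz det_nonzero_off_roots)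
  then have "((\<lambda>w. \<psi> w ** matrix_inv (\<psi> w)) \<longlongrightarrow> mat 1) (at z)"
    by (rule tendsto_eventually)
  ultimately have "\<psi> z ** (\<chi> k j. L k j) = mat 1"
    by (rule tendsto_unique[OF at_neq_bot])
  then show ?thesis
    using invertible_det_nz invertible_right_inverse by blast
qed

lemma inverse_entries_holomorphic: "(\<lambda>w. matrix_inv (\<psi> w) $ k $ j) holomorphic_on \<Omega>"
  using open_\<Omega> \<Omega>_subset_nonpoles det_nonzero
  by (intro matrix_inv_holomorphic_on holomorphic_on_subset[OF entries_holomorphic]) auto

definition \<Psi> :: "complex \<Rightarrow> 'n cmat" where "\<Psi> w = Abs_cmat (\<psi> w)"
definition \<Psi>_inv :: "complex \<Rightarrow> 'n cmat" where "\<Psi>_inv w = Abs_cmat (matrix_inv (\<psi> w))"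
definition \<Psi>' :: "complex \<Rightarrow> 'n cmat" where "\<Psi>' w = Abs_cmat (mat_deriv \<psi> w)"
definition log_deriv :: "complex \<Rightarrow> 'n cmat" where "log_deriv w = \<Psi>_inv w * \<Psi>' w"

lemma Rep_cmat_log_deriv: "Rep_cmat (log_deriv w) = matrix_inv (\<psi> w) ** mat_deriv \<psi> w"
  by (simp add: log_deriv_def \<Psi>_inv_def \<Psi>'_def times_cmat.rep_eq Abs_cmat_inverse)

lemma log_deriv_entries_holomorphic:
  "(\<lambda>w. (matrix_inv (\<psi> w) ** mat_deriv \<psi> w) $ i $ j) holomorphic_on \<Omega>"
proof -
  have "(\<lambda>w. mat_deriv \<psi> w $ i $ j) holomorphic_on - poles" for i j
    using holomorphic_deriv[OF entries_holomorphic open_nonpoles] by (simp add: mat_deriv_def)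
  then show ?thesis
    unfolding matrix_matrix_mult_def
    using inverse_entries_holomorphic holomorphic_on_subset[OF _ \<Omega>_subset_nonpoles]
    by (simp, intro holomorphic_intros) auto
qed

lemma has_cmat_derivative_\<Psi>: "z \<in> \<Omega> \<Longrightarrow> has_cmat_derivative \<Psi> (\<Psi>' z) z"
  unfolding has_cmat_derivative_iff \<Psi>_def \<Psi>'_def
  using \<Omega>_subset_nonpoles
  by (auto simp: mat_deriv_def Abs_cmat_inverse intro!: holomorphic_derivI[OF entries_holomorphic open_nonpoles])

lemma \<Psi>_\<Psi>_inv: "z \<in> \<Omega> \<Longrightarrow> \<Psi> z * \<Psi>_inv z = 1"
  and \<Psi>_inv_\<Psi>: "z \<in> \<Omega> \<Longrightarrow> \<Psi>_inv z * \<Psi> z = 1"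
  using matrix_inv_right[of "\<psi> z"] matrix_inv_left[of "\<psi> z"] det_nonzero[of z]
  by (simp_all add: \<Psi>_def \<Psi>_inv_def invertible_det_nz times_cmat_def one_cmat_def Abs_cmat_inverse)

lemma not_mat_pole: "z \<in> \<Omega> \<Longrightarrow> \<not> mat_pole \<psi> z"
  using \<Omega>_subset_nonpoles by (auto simp: poles_def)

lemma \<Psi>_commute: "z \<in> \<Omega> \<Longrightarrow> w \<in> \<Omega> \<Longrightarrow> \<Psi> z * \<Psi> w = \<Psi> w * \<Psi> z"
  by (simp add: \<Psi>_def times_cmat_def Abs_cmat_inverse commute not_mat_pole)

lemma eventually_nhds_in_\<Omega>: "z \<in> \<Omega> \<Longrightarrow> \<forall>\<^sub>F u in nhds z. u \<in> \<Omega>"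
  using open_\<Omega> by (rule eventually_nhds_in_open)

lemma \<Psi>'_commute_\<Psi>: "z \<in> \<Omega> \<Longrightarrow> w \<in> \<Omega> \<Longrightarrow> \<Psi>' z * \<Psi> w = \<Psi> w * \<Psi>' z"
  using eventually_nhds_in_\<Omega>[of z]
  by (intro has_cmat_derivative_commute[OF has_cmat_derivative_\<Psi>]) (auto elim: eventually_mono simp: \<Psi>_commute)

lemma \<Psi>'_commute: "z \<in> \<Omega> \<Longrightarrow> w \<in> \<Omega> \<Longrightarrow> \<Psi>' z * \<Psi>' w = \<Psi>' w * \<Psi>' z"
  using eventually_nhds_in_\<Omega>[of w]
  by (intro has_cmat_derivative_commute[OF has_cmat_derivative_\<Psi>, THEN sym])
    (auto elim: eventually_mono simp: \<Psi>'_commute_\<Psi>)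

lemma log_deriv_commute:
  assumes z: "z \<in> \<Omega>" and w: "w \<in> \<Omega>"
  shows "log_deriv z * log_deriv w = log_deriv w * log_deriv z"
proof -
  have inv_\<Psi>: "\<Psi>_inv z * \<Psi> w = \<Psi> w * \<Psi>_inv z"
    by (rule commute_with_inverse[OF \<Psi>_\<Psi>_inv[OF z] \<Psi>_inv_\<Psi>[OF z] \<Psi>_commute[OF z w]])
  have inv_inv: "\<Psi>_inv z * \<Psi>_inv w = \<Psi>_inv w * \<Psi>_inv z"
    using commute_with_inverse[OF \<Psi>_\<Psi>_inv[OF w] \<Psi>_inv_\<Psi>[OF w] inv_\<Psi>[symmetric]] by simp
  have inv_\<Psi>'_z: "\<Psi>_inv w * \<Psi>' z = \<Psi>' z * \<Psi>_inv w"
    by (rule commute_with_inverse[OF \<Psi>_\<Psi>_inv[OF w] \<Psi>_inv_\<Psi>[OF w] \<Psi>'_commute_\<Psi>[OF z w, symmetric]])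
  have inv_\<Psi>'_w: "\<Psi>_inv z * \<Psi>' w = \<Psi>' w * \<Psi>_inv z"
    by (rule commute_with_inverse[OF \<Psi>_\<Psi>_inv[OF z] \<Psi>_inv_\<Psi>[OF z] \<Psi>'_commute_\<Psi>[OF w z, symmetric]])
  have "log_deriv z * log_deriv w = \<Psi>_inv z * (\<Psi>' z * \<Psi>_inv w) * \<Psi>' w"
    by (simp add: log_deriv_def mult.assoc)
  also have "\<dots> = \<Psi>_inv z * \<Psi>_inv w * (\<Psi>' z * \<Psi>' w)"
    by (simp add: inv_\<Psi>'_z[symmetric] mult.assoc)
  also have "\<dots> = \<Psi>_inv w * (\<Psi>_inv z * \<Psi>' w) * \<Psi>' z"
    by (simp add: inv_inv \<Psi>'_commute z w mult.assoc)
  also have "\<dots> = log_deriv w * log_deriv z"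
    by (simp add: log_deriv_def inv_\<Psi>'_w mult.assoc)
  finally show ?thesis .
qed

lemma log_deriv_entry_primitive:
  "\<exists>g. \<forall>x\<in>\<Omega>. (g has_field_derivative (matrix_inv (\<psi> x) ** mat_deriv \<psi> x) $ i $ j) (at x)"
  using holomorphic_on_imp_continuous_on[OF log_deriv_entries_holomorphic]
    holomorphic_on_imp_differentiable_at[OF log_deriv_entries_holomorphic open_\<Omega>]
  by (intro holomorphic_starlike_primitive[where k = "{}", OF _ starlike_\<Omega>]) (auto simp: open_\<Omega>)

definition H :: "complex \<Rightarrow> complex^'n^'n" where
  "H w = (\<chi> i j. let g = (SOME g. \<forall>x\<in>\<Omega>. (g has_field_derivative
             (matrix_inv (\<psi> x) ** mat_deriv \<psi> x) $ i $ j) (at x)) in g w - g 0)"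

lemma H_has_field_derivative:
  "w \<in> \<Omega> \<Longrightarrow> ((\<lambda>z. H z $ i $ j) has_field_derivative (matrix_inv (\<psi> w) ** mat_deriv \<psi> w) $ i $ j) (at w)"
  using someI_ex[OF log_deriv_entry_primitive[of i j]]
  unfolding H_def Let_def by (auto intro!: derivative_eq_intros)

lemma H_0: "H 0 = 0"
  by (simp add: H_def vec_eq_iff)

lemma H_entries_holomorphic: "(\<lambda>z. H z $ i $ j) holomorphic_on \<Omega>"
  using H_has_field_derivative open_\<Omega> by (auto simp: holomorphic_on_open)

definition h :: "complex \<Rightarrow> 'n cmat" where "h w = Abs_cmat (H w)"

lemma h_0: "h 0 = 0"
  by (simp add: h_def H_0 zero_cmat_def)

lemma has_cmat_derivative_h: "w \<in> \<Omega> \<Longrightarrow> has_cmat_derivative h (log_deriv w) w"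
  by (simp add: has_cmat_derivative_iff h_def Abs_cmat_inverse Rep_cmat_log_deriv H_has_field_derivative)

lemma h_commute_log_deriv: "z \<in> \<Omega> \<Longrightarrow> w \<in> \<Omega> \<Longrightarrow> h w * log_deriv z = log_deriv z * h w"
  by (rule commute_propagates_from_derivative[OF connected_\<Omega> open_\<Omega> has_cmat_derivative_h
        _ zero_in_\<Omega>]) (simp_all add: log_deriv_commute h_0)

lemma h_commute: "z \<in> \<Omega> \<Longrightarrow> w \<in> \<Omega> \<Longrightarrow> h w * h z = h z * h w"
  by (rule commute_propagates_from_derivative[OF connected_\<Omega> open_\<Omega> has_cmat_derivative_h
        _ zero_in_\<Omega>]) (simp_all add: h_commute_log_deriv h_0)

text \<open>\<open>exp (- h) * \<Psi>\<close> has derivative \<open>exp (- h) * (\<Psi>' - log_deriv * \<Psi>) = 0\<close>, hence is constant.\<close>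

lemma exp_h: assumes w: "w \<in> \<Omega>" shows "exp (h w) = \<Psi> w"
proof -
  let ?E = "\<lambda>u. exp (- h u) * \<Psi> u"
  have "?E w = ?E 0"
  proof (rule has_cmat_derivative_zero_constant[OF connected_\<Omega> open_\<Omega> _ zero_in_\<Omega> w])
    fix z assume z: "z \<in> \<Omega>"
    have "\<forall>\<^sub>F u in at z. - h u * - h z = - h z * - h u"
      using eventually_at_in_open'[OF open_\<Omega> z] by eventually_elim (simp add: h_commute z)
    then have "has_cmat_derivative ?E (exp (- h z) * - log_deriv z * \<Psi> z + exp (- h z) * \<Psi>' z) z"
      by (intro has_cmat_derivative_mult has_cmat_derivative_exp has_cmat_derivative_minus
          has_cmat_derivative_h has_cmat_derivative_\<Psi> z)
    moreover have "log_deriv z * \<Psi> z = \<Psi>' z"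
      using \<Psi>'_commute_\<Psi>[OF z z] \<Psi>_inv_\<Psi>[OF z] by (simp add: log_deriv_def mult.assoc)
        (simp add: mult.assoc[symmetric])
    ultimately show "has_cmat_derivative ?E 0 z"
      by (simp add: mult.assoc)
  qed
  moreover have "\<Psi> 0 = 1"
    by (simp add: \<Psi>_def psi_0 one_cmat_def)
  ultimately have "exp (- h w) * \<Psi> w = 1"
    by (simp add: h_0)
  then have "exp (h w) * (exp (- h w) * \<Psi> w) = exp (h w)"
    by simp
  then show ?thesis
    by (simp add: mult.assoc[symmetric] exp_add_commuting[symmetric])
qed

lemma log_branch_H: "log_branch \<psi> H"
proof -
  have "mat_exp (H w) = \<psi> w" if "w \<in> \<Omega>" for w
    using arg_cong[OF exp_h[OF that], of Rep_cmat]
    by (simp add: Rep_cmat_exp h_def \<Psi>_def Abs_cmat_inverse)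
  then show ?thesis
    using H_entries_holomorphic H_0 by (simp add: log_branch_def mat_holomorphic_on_def \<Omega>_def)
qed

lemma H_commute: "z \<in> \<Omega> \<Longrightarrow> w \<in> \<Omega> \<Longrightarrow> H w ** H z = H z ** H w"
  using arg_cong[OF h_commute[of z w], of Rep_cmat]
  by (simp add: h_def times_cmat.rep_eq Abs_cmat_inverse)

lemma log_branch_unique:
  assumes H': "log_branch \<psi> H'" and w: "w \<in> \<Omega>"
  shows "H' w = H w"
proof -
  have H'_holomorphic: "(\<lambda>z. H' z $ i $ j) holomorphic_on \<Omega>" for i j
    using H' by (simp add: log_branch_def mat_holomorphic_on_def \<Omega>_def)
  have "\<forall>\<^sub>F z in nhds 0. norm (Abs_cmat (H' z)) < 1/4"
    using tendsto_Abs_cmat_holomorphic[OF H'_holomorphic open_\<Omega> zero_in_\<Omega>] H'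
    by (intro order_tendstoD(2)[OF tendsto_norm]) (auto simp: log_branch_def zero_cmat_def[symmetric])
  moreover have "\<forall>\<^sub>F z in nhds 0. norm (h z) < 1/4"
    using tendsto_Abs_cmat_holomorphic[OF H_entries_holomorphic open_\<Omega> zero_in_\<Omega>]
    by (intro order_tendstoD(2)[OF tendsto_norm]) (auto simp: h_def[symmetric] h_0)
  ultimately have "\<forall>\<^sub>F z in nhds 0. z \<in> \<Omega> \<and> norm (Abs_cmat (H' z)) < 1/4 \<and> norm (h z) < 1/4"
    using eventually_nhds_in_\<Omega>[OF zero_in_\<Omega>] by eventually_elim simp
  then obtain U where U: "open U" "0 \<in> U" "\<And>z. z \<in> U \<Longrightarrow> z \<in> \<Omega> \<and> norm (Abs_cmat (H' z)) < 1/4 \<and> norm (h z) < 1/4"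
    unfolding eventually_nhds by blast
  have eq_on_U: "H' z = H z" if "z \<in> U" for z
  proof -
    have "exp (Abs_cmat (H' z)) = \<Psi> z"
      using H' U(3)[OF that] Rep_cmat_exp[of "Abs_cmat (H' z)"]
      by (simp add: Rep_cmat_inject[symmetric] Abs_cmat_inverse \<Psi>_def log_branch_def \<Omega>_def)
    then have "Abs_cmat (H' z) = h z"
      using U(3)[OF that] exp_h by (auto intro: exp_inj_small[rotated 2])
    then show ?thesis
      by (simp add: h_def Abs_cmat_inject)
  qed
  have "H' w $ i $ j = H w $ i $ j" for i j
    by (rule analytic_continuation_open[where s = U and s' = \<Omega>])
      (use U open_\<Omega> connected_\<Omega> H'_holomorphic H_entries_holomorphic w eq_on_U in auto)
  then show ?thesis
    by (simp add: vec_eq_iff)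
qed

end

theorem proposition8p4:
  fixes \<psi> :: "complex \<Rightarrow> complex^'n^'n"
  assumes rat: "rational_mat_fun \<psi>"
    and regular: "\<And>z. \<not> mat_pole \<psi> z \<Longrightarrow> isCont \<psi> z"
    and reg0: "\<not> mat_pole \<psi> 0"
    and reg_inf: "\<exists>L. (\<psi> \<longlongrightarrow> L) at_infinity"
    and psi0: "\<psi> 0 = mat 1"
    and comm: "\<And>w w'. \<not> mat_pole \<psi> w \<Longrightarrow> \<not> mat_pole \<psi> w' \<Longrightarrow> \<psi> w ** \<psi> w' = \<psi> w' ** \<psi> w"
  shows "\<exists>H. log_branch \<psi> H
            \<and> (\<forall>H'. log_branch \<psi> H' \<longrightarrow> (\<forall>w \<in> - Yset \<psi>. H' w = H w))
            \<and> (\<forall>w \<in> - Yset \<psi>. \<forall>w' \<in> - Yset \<psi>. H w ** H w' = H w' ** H w)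
            \<and> (\<forall>w \<in> - Yset \<psi>. \<forall>i j. ((\<lambda>z. H z $ i $ j) has_field_derivative
                   (matrix_inv (\<psi> w) ** mat_deriv \<psi> w) $ i $ j) (at w))"
proof -
  obtain P q where "q \<noteq> 0" "\<And>w. poly q w \<noteq> 0 \<Longrightarrow> \<psi> w = (\<chi> i j. poly (P $ i $ j) w / poly q w)"
    using rat unfolding rational_mat_fun_def by blast
  then interpret commuting_rational_matrix \<psi> P q
    using regular reg0 psi0 comm by unfold_locales auto
  show ?thesis
    using log_branch_H log_branch_unique H_commute H_has_field_derivative
    unfolding \<Omega>_def by blast
qed

end
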